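(* Let $k\in\mathbb Z$, $\mathbb N_k=\{l\in\mathbb Z:l\le k\}$, and $\xi$ a random variable with $\mathbb P(\xi=l)=p_l$, $l\in\mathbb N_k$, $p_l\ge0$, $\sum_lp_l=1$, $p_k\in(0,1)$. Let $Z$ be the Markov chain on $\Omega_k$ described in the context. Then there is a constant $C>0$ such that, as $N\to\infty$, $$\sum_{n\in\Omega_k^0}P_\oplus(T_n<T_\oplus)=P_\oplus(T_A<T_\oplus)\big(1+O(e^{-CN})\big).$$
   Context: $\Omega_k=\{m\in\{0,\dots,N\}^{\mathbb N_k}:\sum_{i\in\mathbb N_k}m_i=N\}$, $\phi(m)=\sup\{i:m_i>0\}$. The chain $Z$ on $\Omega_k$ has the kernel: from state $m$, take any $x\in\mathbb Z^N$ with exactly $m_l$ coordinates equal to $l$ for each $l\in\mathbb N_k$, let $\{\xi_{i,j}:1\le i,j\le N\}$ be fresh i.i.d. copies of $\xi$, and let the next state be $\big(\#\{i\le N:\max_j(x_j+\xi_{i,j})=\phi(m)+l\}\big)_{l\in\mathbb N_k}$. $P_m$ refers to the chain started at $m$; $T_m=\inf\{t\ge1:Z(t)=m\}$; $\oplus\in\Omega_k$ is the state with $\oplus_k=N$ and all other coordinates $0$; $\Omega_k^0=\{m\in\Omega_k:m_k=0\}$; $T_A=\inf_{m\in\Omega_k^0}T_m$. *)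

theory Defs
  imports "HOL-Probability.Probability" "HOL-Library.Landau_Symbols"
begin

(* States m : int => nat are count vectors indexed by N_k = {l. l <= k},
   extended by 0 above k. *)
definition Omega :: "int \<Rightarrow> nat \<Rightarrow> (int \<Rightarrow> nat) set" where
  "Omega k N = {m. (\<forall>l. k < l \<longrightarrow> m l = 0) \<and> finite {l. m l \<noteq> 0}
                   \<and> (\<Sum>l\<in>{l. m l \<noteq> 0}. m l) = N}"

definition Omega0 :: "int \<Rightarrow> nat \<Rightarrow> (int \<Rightarrow> nat) set" where
  "Omega0 k N = {m \<in> Omega k N. m k = 0}"

definition oplus :: "int \<Rightarrow> nat \<Rightarrow> (int \<Rightarrow> nat)" where
  "oplus k N = (\<lambda>l. if l = k then N else 0)"

definition phi :: "(int \<Rightarrow> nat) \<Rightarrow> int" where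
  "phi m = Max {l. 0 < m l}"

definition config :: "nat \<Rightarrow> (int \<Rightarrow> nat) \<Rightarrow> nat \<Rightarrow> int" where
  "config N m = (SOME x. \<forall>l. card {j \<in> {..<N}. x j = l} = m l)"

definition step :: "int pmf \<Rightarrow> nat \<Rightarrow> (int \<Rightarrow> nat) \<Rightarrow> (int \<Rightarrow> nat) pmf" where
  "step xi N m = map_pmf
     (\<lambda>X. (\<lambda>l. card {i \<in> {..<N}. (MAX j\<in>{..<N}. config N m j + X (i, j)) = phi m + l}))
     (Pi_pmf ({..<N} \<times> {..<N}) 0 (\<lambda>_. xi))"

(* law of the path [Z(1), ..., Z(t)] under P_m *)
fun paths :: "('s \<Rightarrow> 's pmf) \<Rightarrow> 's \<Rightarrow> nat \<Rightarrow> 's list pmf" where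
  "paths K m 0 = return_pmf []"
| "paths K m (Suc t) = bind_pmf (K m) (\<lambda>m'. map_pmf (Cons m') (paths K m' t))"

(* P_m(T_A < T_b), where T_A = first time t >= 1 with Z(t) in A, T_b = first time t >= 1
   with Z(t) = b (inf {} = infinity); obtained as the increasing limit of the
   probabilities of {T_A <= t and T_A < T_b}. *)
definition hit_before :: "('s \<Rightarrow> 's pmf) \<Rightarrow> 's \<Rightarrow> 's set \<Rightarrow> 's \<Rightarrow> real" where
  "hit_before K m A b = (SUP t. measure_pmf.prob (paths K m t)
      {zs. \<exists>i<length zs. zs ! i \<in> A \<and> (\<forall>j\<le>i. zs ! j \<noteq> b)})"

end

theory Submission
  imports Defs
begin

text \<open>
  Started at \<open>oplus\<close>, the sum over \<open>n \<in> Omega0\<close> of \<open>P(T_n < T_oplus)\<close> is the expected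
  number of distinct states of \<open>Omega0\<close> visited before \<open>T_oplus\<close>. It is therefore at least
  \<open>P(T_A < T_oplus)\<close>, and at most \<open>(1 + G) P(T_A < T_oplus)\<close> if from every state at most \<open>G\<close>
  visits to \<open>Omega0\<close> before \<open>T_oplus\<close> are expected. Such a \<open>G\<close> is provided by a Lyapunov
  function. From a state \<open>m\<close>, each of the \<open>N\<close> new particles independently reaches the new top
  level \<open>phi m + k\<close> unless all its increments from the \<open>m (phi m)\<close> top particles miss \<open>k\<close>,
  which has probability \<open>x = q ^ m (phi m)\<close> with \<open>q = 1 - p_k\<close>; so the next state lies in
  \<open>Omega0\<close> with probability \<open>x ^ N\<close>, and the number of top particles in it is binomial.
  For large \<open>N\<close> this makes \<open>g m = 2 q ^ (N - 1) (q ^ m (phi m) + 1)\<close> a supersolution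
  of the visit-counting equation, whence \<open>G = 4 q ^ (N - 1) = O(exp (- C N))\<close>.
\<close>

section \<open>Hitting probabilities of a Markov kernel\<close>

definition hit_paths :: "'s set \<Rightarrow> 's \<Rightarrow> 's list set" where
  "hit_paths A b = {zs. \<exists>i<length zs. zs ! i \<in> A \<and> (\<forall>j\<le>i. zs ! j \<noteq> b)}"

definition hit_before_upto :: "('s \<Rightarrow> 's pmf) \<Rightarrow> nat \<Rightarrow> 's \<Rightarrow> 's set \<Rightarrow> 's \<Rightarrow> real" where
  "hit_before_upto K t m A b = measure_pmf.prob (paths K m t) (hit_paths A b)"

lemma integrable_measure_pmf_bounded:
  fixes f :: "'a \<Rightarrow> real"
  assumes "\<And>x. x \<in> set_pmf M \<Longrightarrow> \<bar>f x\<bar> \<le> B"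
  shows "integrable (measure_pmf M) f"
  by (rule measure_pmf.integrable_const_bound[where B = B]) (use assms in \<open>auto intro: AE_pmfI\<close>)

lemma prob_bind_pmf:
  "measure_pmf.prob (bind_pmf M N) X = measure_pmf.expectation M (\<lambda>x. measure_pmf.prob (N x) X)"
proof -
  have "ennreal (measure_pmf.prob (bind_pmf M N) X) = emeasure (bind_pmf M N) X"
    by (simp add: measure_pmf.emeasure_eq_measure)
  also have "\<dots> = (\<integral>\<^sup>+x. emeasure (N x) X \<partial>M)"
    by simp
  also have "\<dots> = (\<integral>\<^sup>+x. ennreal (measure_pmf.prob (N x) X) \<partial>M)"
    by (simp add: measure_pmf.emeasure_eq_measure)
  also have "\<dots> = ennreal (measure_pmf.expectation M (\<lambda>x. measure_pmf.prob (N x) X))"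
    by (rule nn_integral_eq_integral) (auto intro!: integrable_measure_pmf_bounded[where B = 1])
  finally show ?thesis by (simp add: integral_nonneg)
qed

lemma Cons_vimage_hit_paths:
  "Cons m -` hit_paths A b = (if m = b then {} else if m \<in> A then UNIV else hit_paths A b)"
proof -
  have all_le_Suc: "(\<forall>j\<le>Suc i. Q j) \<longleftrightarrow> Q 0 \<and> (\<forall>j\<le>i. Q (Suc j))" for Q i
    by (metis Suc_le_mono le0 not0_implies_Suc)
  have "m # zs \<in> hit_paths A b \<longleftrightarrow> (if m = b then False else m \<in> A \<or> zs \<in> hit_paths A b)" for zs
    unfolding hit_paths_def
    by (simp only: mem_Collect_eq length_Cons Ex_less_Suc2 all_le_Suc nth_Cons_0 nth_Cons_Suc le0) auto
  then show ?thesis by auto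
qed

lemma hit_before_upto_0 [simp]: "hit_before_upto K 0 m A b = 0"
  by (simp add: hit_before_upto_def hit_paths_def)

lemma hit_before_upto_Suc:
  "hit_before_upto K (Suc t) m A b = measure_pmf.expectation (K m)
     (\<lambda>m'. if m' = b then 0 else if m' \<in> A then 1 else hit_before_upto K t m' A b)"
  unfolding hit_before_upto_def
  by (auto simp: prob_bind_pmf Cons_vimage_hit_paths intro!: Bochner_Integration.integral_cong)

lemma hit_before_upto_nonneg: "0 \<le> hit_before_upto K t m A b"
  by (simp add: hit_before_upto_def)

lemma hit_before_upto_le_1: "hit_before_upto K t m A b \<le> 1"
  by (simp add: hit_before_upto_def)

lemma integrable_hit_before_upto_step:
  "integrable (measure_pmf M) (\<lambda>m'. if m' = b then 0 else if m' \<in> A then 1 else hit_before_upto K t m' A b)"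
  by (rule integrable_measure_pmf_bounded[where B = 1])
    (auto simp: hit_before_upto_nonneg hit_before_upto_le_1 abs_le_iff)

lemma incseq_hit_before_upto: "incseq (\<lambda>t. hit_before_upto K t m A b)"
proof (rule incseq_SucI)
  show "hit_before_upto K t m A b \<le> hit_before_upto K (Suc t) m A b" for t
  proof (induction t arbitrary: m)
    case (Suc t)
    show ?case
      unfolding hit_before_upto_Suc[of K "Suc t" m] hit_before_upto_Suc[of K t m]
      by (intro integral_mono integrable_hit_before_upto_step) (use Suc.IH in auto)
  qed (simp add: hit_before_upto_nonneg)
qed

lemma hit_before_upto_tendsto: "(\<lambda>t. hit_before_upto K t m A b) \<longlonglongrightarrow> hit_before K m A b"
  unfolding hit_before_def hit_before_upto_def[symmetric] hit_paths_def[symmetric]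
  by (rule LIMSEQ_incseq_SUP)
    (auto simp: bdd_above_def hit_before_upto_le_1 incseq_hit_before_upto intro!: exI[of _ 1])

lemma hit_before_upto_le_hit_before: "hit_before_upto K t m A b \<le> hit_before K m A b"
  by (rule incseq_le[OF incseq_hit_before_upto hit_before_upto_tendsto])

lemma hit_before_nonneg: "0 \<le> hit_before K m A b"
  by (rule order.trans[OF hit_before_upto_nonneg hit_before_upto_le_hit_before])

primrec visits_upto :: "('s \<Rightarrow> 's pmf) \<Rightarrow> nat \<Rightarrow> 's \<Rightarrow> 's set \<Rightarrow> 's \<Rightarrow> real" where
  "visits_upto K 0 m A b = 0"
| "visits_upto K (Suc t) m A b = measure_pmf.expectation (K m)
     (\<lambda>m'. if m' = b then 0 else indicator A m' + visits_upto K t m' A b)"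

lemma visits_upto_bounds: "0 \<le> visits_upto K t m A b \<and> visits_upto K t m A b \<le> real t"
proof (induction t arbitrary: m)
  case (Suc t)
  have step_bounds: "0 \<le> (if m' = b then 0 else indicator A m' + visits_upto K t m' A b) \<and>
      (if m' = b then 0 else indicator A m' + visits_upto K t m' A b) \<le> 1 + real t" for m'
    using Suc.IH[of m'] by (auto simp: indicator_def)
  then have "integrable (measure_pmf (K m))
      (\<lambda>m'. if m' = b then 0 else indicator A m' + visits_upto K t m' A b)"
    by (intro integrable_measure_pmf_bounded[where B = "1 + real t"]) (auto simp: abs_le_iff)
  then have "visits_upto K (Suc t) m A b \<le> measure_pmf.expectation (K m) (\<lambda>_. 1 + real t)"
    unfolding visits_upto.simps by (rule integral_mono) (use step_bounds in auto)
  moreover have "0 \<le> visits_upto K (Suc t) m A b"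
    unfolding visits_upto.simps by (rule Bochner_Integration.integral_nonneg) (use step_bounds in auto)
  ultimately show ?case by simp
qed simp

lemma integrable_visits_upto_step:
  "integrable (measure_pmf M) (\<lambda>m'. if m' = b then 0 else indicator A m' + visits_upto K t m' A b)"
proof (rule integrable_measure_pmf_bounded[where B = "1 + real t"])
  show "\<bar>if m' = b then 0 else indicator A m' + visits_upto K t m' A b\<bar> \<le> 1 + real t" for m'
    using visits_upto_bounds[of K t m' A b] by (auto simp: indicator_def)
qed

lemma sum_hit_before_upto_le_visits_upto:
  assumes "finite F" "F \<subseteq> A"
  shows "(\<Sum>n\<in>F. hit_before_upto K t m {n} b) \<le> visits_upto K t m A b"
proof (induction t arbitrary: m)
  case (Suc t)
  have pointwise: "(\<Sum>n\<in>F. if m' = b then 0 else if m' \<in> {n} then 1 else hit_before_upto K t m' {n} b)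
      \<le> (if m' = b then 0 else indicator A m' + visits_upto K t m' A b)" for m'
  proof (cases "m' = b")
    case False
    have "(\<Sum>n\<in>F. if m' \<in> {n} then 1 else hit_before_upto K t m' {n} b)
        \<le> (\<Sum>n\<in>F. indicator {n} m' + hit_before_upto K t m' {n} b)"
      by (intro sum_mono) (auto simp: hit_before_upto_nonneg)
    also have "\<dots> = indicator F m' + (\<Sum>n\<in>F. hit_before_upto K t m' {n} b)"
      using assms(1) by (simp add: sum.distrib indicator_def sum.delta)
    also have "\<dots> \<le> indicator A m' + visits_upto K t m' A b"
      using assms(2) Suc.IH[of m'] by (auto simp: indicator_def)
    finally show ?thesis using False by simp
  qed simp
  have "(\<Sum>n\<in>F. hit_before_upto K (Suc t) m {n} b) = measure_pmf.expectation (K m)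
      (\<lambda>m'. \<Sum>n\<in>F. if m' = b then 0 else if m' \<in> {n} then 1 else hit_before_upto K t m' {n} b)"
    unfolding hit_before_upto_Suc
    by (rule Bochner_Integration.integral_sum[symmetric]) (rule integrable_hit_before_upto_step)
  also have "\<dots> \<le> visits_upto K (Suc t) m A b"
    unfolding visits_upto.simps
    by (intro integral_mono pointwise integrable_visits_upto_step Bochner_Integration.integrable_sum
        integrable_hit_before_upto_step)
  finally show ?case .
qed simp

text \<open>Union bound over the first state of \<open>A\<close> that a path visits.\<close>

lemma hit_before_upto_le_if_singleton_sums_le:
  assumes "\<And>F. finite F \<Longrightarrow> F \<subseteq> A \<Longrightarrow> (\<Sum>n\<in>F. hit_before_upto K t m {n} b) \<le> c"
  shows "hit_before_upto K t m A b \<le> c"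
proof -
  let ?M = "paths K m t"
  have "hit_before_upto K t m A b = (\<Sum>\<^sub>\<infinity>zs\<in>hit_paths A b. pmf ?M zs)"
    unfolding hit_before_upto_def measure_pmf_conv_infsetsum
    by (rule infsetsum_infsum) (rule pmf_abs_summable)
  also have "\<dots> \<le> c"
  proof (rule infsum_le_finite_sums)
    show "pmf ?M summable_on hit_paths A b"
      using pmf_abs_summable abs_summable_summable abs_summable_equivalent by blast
    fix Z assume Z: "finite Z" "Z \<subseteq> hit_paths A b"
    define F where "F = (\<Union>zs\<in>Z. {n \<in> A \<inter> set zs. zs \<in> hit_paths {n} b})"
    have F: "finite F" "F \<subseteq> A" unfolding F_def using Z(1) by auto
    have Z_cover: "Z \<subseteq> (\<Union>n\<in>F. hit_paths {n} b)"
    proof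
      fix zs assume zs: "zs \<in> Z"
      then obtain i where i: "i < length zs" "zs ! i \<in> A" "\<forall>j\<le>i. zs ! j \<noteq> b"
        using Z(2) by (auto simp: hit_paths_def)
      then have "zs ! i \<in> F" "zs \<in> hit_paths {zs ! i} b"
        using zs by (auto simp: F_def hit_paths_def intro!: bexI[of _ zs] exI[of _ i])
      then show "zs \<in> (\<Union>n\<in>F. hit_paths {n} b)" by blast
    qed
    have "sum (pmf ?M) Z = measure_pmf.prob ?M Z"
      using Z(1) by (simp add: measure_measure_pmf_finite)
    also have "\<dots> \<le> measure_pmf.prob ?M (\<Union>n\<in>F. hit_paths {n} b)"
      by (rule measure_pmf.finite_measure_mono) (use Z_cover in auto)
    also have "\<dots> \<le> (\<Sum>n\<in>F. hit_before_upto K t m {n} b)"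
      unfolding hit_before_upto_def
      by (rule measure_pmf.finite_measure_subadditive_finite) (use F in auto)
    also have "\<dots> \<le> c" by (rule assms[OF F])
    finally show "sum (pmf ?M) Z \<le> c" .
  qed
  finally show ?thesis .
qed

lemma visits_upto_le_lyapunov:
  assumes closed: "\<And>m. m \<in> \<Omega> \<Longrightarrow> set_pmf (K m) \<subseteq> \<Omega>"
    and g: "\<And>m. m \<in> \<Omega> \<Longrightarrow> 0 \<le> g m \<and> g m \<le> G"
    and drift: "\<And>m. m \<in> \<Omega> \<Longrightarrow>
      measure_pmf.expectation (K m) (\<lambda>m'. if m' = b then 0 else indicator A m' + g m') \<le> g m"
    and "m \<in> \<Omega>"
  shows "visits_upto K t m A b \<le> g m"
  using \<open>m \<in> \<Omega>\<close>
proof (induction t arbitrary: m)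
  case 0
  then show ?case using g by simp
next
  case (Suc t)
  have "integrable (measure_pmf (K m)) (\<lambda>m'. if m' = b then 0 else indicator A m' + g m')"
    by (rule integrable_measure_pmf_bounded[where B = "1 + G"])
      (use g closed[OF Suc.prems] in \<open>force simp: indicator_def\<close>)
  then have "visits_upto K (Suc t) m A b
      \<le> measure_pmf.expectation (K m) (\<lambda>m'. if m' = b then 0 else indicator A m' + g m')"
    unfolding visits_upto.simps
    by (rule integral_mono_AE[OF integrable_visits_upto_step])
      (use Suc.IH closed[OF Suc.prems] in \<open>auto intro!: AE_pmfI\<close>)
  also have "\<dots> \<le> g m" by (rule drift[OF Suc.prems])
  finally show ?case .
qed

text \<open>Once \<open>A\<close> has been hit, at most \<open>G\<close> further visits are expected.\<close>

lemma visits_upto_le_hit_before_upto: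
  assumes closed: "\<And>m. m \<in> \<Omega> \<Longrightarrow> set_pmf (K m) \<subseteq> \<Omega>"
    and G: "\<And>t m. m \<in> \<Omega> \<Longrightarrow> visits_upto K t m A b \<le> G"
    and "m \<in> \<Omega>"
  shows "visits_upto K t m A b \<le> (1 + G) * hit_before_upto K t m A b"
  using \<open>m \<in> \<Omega>\<close>
proof (induction t arbitrary: m)
  case (Suc t)
  have "visits_upto K (Suc t) m A b \<le> measure_pmf.expectation (K m)
      (\<lambda>m'. (1 + G) * (if m' = b then 0 else if m' \<in> A then 1 else hit_before_upto K t m' A b))"
    unfolding visits_upto.simps
    by (intro integral_mono_AE integrable_visits_upto_step integrable_mult_right
        integrable_hit_before_upto_step AE_pmfI)
      (use Suc.IH closed[OF Suc.prems] G in \<open>auto simp: indicator_def\<close>)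
  also have "\<dots> = (1 + G) * hit_before_upto K (Suc t) m A b"
    by (simp add: hit_before_upto_Suc)
  finally show ?case .
qed simp

lemma sum_hit_before_singletons_le:
  assumes closed: "\<And>m. m \<in> \<Omega> \<Longrightarrow> set_pmf (K m) \<subseteq> \<Omega>"
    and G: "0 \<le> G" "\<And>t m. m \<in> \<Omega> \<Longrightarrow> visits_upto K t m A b \<le> G"
    and m: "m \<in> \<Omega>" and F: "finite F" "F \<subseteq> A"
  shows "(\<Sum>n\<in>F. hit_before K m {n} b) \<le> (1 + G) * hit_before K m A b"
proof (rule LIMSEQ_le_const2)
  show "(\<lambda>t. \<Sum>n\<in>F. hit_before_upto K t m {n} b) \<longlonglongrightarrow> (\<Sum>n\<in>F. hit_before K m {n} b)"
    by (intro tendsto_sum hit_before_upto_tendsto)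
  show "\<exists>N. \<forall>t\<ge>N. (\<Sum>n\<in>F. hit_before_upto K t m {n} b) \<le> (1 + G) * hit_before K m A b"
  proof (intro exI allI impI)
    fix t
    have "(\<Sum>n\<in>F. hit_before_upto K t m {n} b) \<le> visits_upto K t m A b"
      by (rule sum_hit_before_upto_le_visits_upto[OF F])
    also have "\<dots> \<le> (1 + G) * hit_before_upto K t m A b"
      by (rule visits_upto_le_hit_before_upto[OF closed G(2) m])
    also have "\<dots> \<le> (1 + G) * hit_before K m A b"
      using G(1) by (intro mult_left_mono hit_before_upto_le_hit_before) auto
    finally show "(\<Sum>n\<in>F. hit_before_upto K t m {n} b) \<le> (1 + G) * hit_before K m A b" .
  qed
qed

lemma hit_before_le_infsum_singletons:
  assumes summable: "(\<lambda>n. hit_before K m {n} b) summable_on A"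
  shows "hit_before K m A b \<le> (\<Sum>\<^sub>\<infinity>n\<in>A. hit_before K m {n} b)"
proof (rule LIMSEQ_le_const2[OF hit_before_upto_tendsto], intro exI allI impI)
  fix t
  show "hit_before_upto K t m A b \<le> (\<Sum>\<^sub>\<infinity>n\<in>A. hit_before K m {n} b)"
  proof (rule hit_before_upto_le_if_singleton_sums_le)
    fix F assume F: "finite F" "F \<subseteq> A"
    have "(\<Sum>n\<in>F. hit_before_upto K t m {n} b) \<le> (\<Sum>n\<in>F. hit_before K m {n} b)"
      by (intro sum_mono hit_before_upto_le_hit_before)
    also have "\<dots> \<le> (\<Sum>\<^sub>\<infinity>n\<in>A. hit_before K m {n} b)"
      by (rule finite_sum_le_infsum[OF summable F]) (rule hit_before_nonneg)
    finally show "(\<Sum>n\<in>F. hit_before_upto K t m {n} b) \<le> (\<Sum>\<^sub>\<infinity>n\<in>A. hit_before K m {n} b)" .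
  qed
qed

lemma hit_before_singleton_sums_bounds:
  assumes closed: "\<And>m. m \<in> \<Omega> \<Longrightarrow> set_pmf (K m) \<subseteq> \<Omega>"
    and g: "\<And>m. m \<in> \<Omega> \<Longrightarrow> 0 \<le> g m \<and> g m \<le> G"
    and drift: "\<And>m. m \<in> \<Omega> \<Longrightarrow>
      measure_pmf.expectation (K m) (\<lambda>m'. if m' = b then 0 else indicator A m' + g m') \<le> g m"
    and m: "m \<in> \<Omega>"
  shows "(\<lambda>n. hit_before K m {n} b) summable_on A"
    and "hit_before K m A b \<le> (\<Sum>\<^sub>\<infinity>n\<in>A. hit_before K m {n} b)"
    and "(\<Sum>\<^sub>\<infinity>n\<in>A. hit_before K m {n} b) \<le> (1 + G) * hit_before K m A b"
proof -
  have G: "0 \<le> G" using g[OF m] by linarith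
  have "visits_upto K t m' A b \<le> G" if "m' \<in> \<Omega>" for t m'
    using visits_upto_le_lyapunov[of \<Omega> K g G b A m' t] closed g drift that by fastforce
  note finite_sums = sum_hit_before_singletons_le[OF closed G this m]
  show summable: "(\<lambda>n. hit_before K m {n} b) summable_on A"
    by (rule nonneg_bdd_above_summable_on)
      (use finite_sums hit_before_nonneg in \<open>auto simp: bdd_above_def\<close>)
  show "hit_before K m A b \<le> (\<Sum>\<^sub>\<infinity>n\<in>A. hit_before K m {n} b)"
    by (rule hit_before_le_infsum_singletons[OF summable])
  show "(\<Sum>\<^sub>\<infinity>n\<in>A. hit_before K m {n} b) \<le> (1 + G) * hit_before K m A b"
    by (rule infsum_le_finite_sums[OF summable finite_sums])
qed

section \<open>Matrices with i.i.d. entries\<close>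

lemma Pi_pmf_Times_eq_rows:
  assumes I: "finite I" and J: "finite J"
  shows "Pi_pmf (I \<times> J) d (\<lambda>_. p) = map_pmf case_prod (Pi_pmf I (\<lambda>_. d) (\<lambda>_. Pi_pmf J d (\<lambda>_. p)))"
proof (rule pmf_eqI)
  fix X :: "'a \<times> 'b \<Rightarrow> 'c"
  have inj: "inj (case_prod :: ('a \<Rightarrow> 'b \<Rightarrow> 'c) \<Rightarrow> _)"
    by (intro injI) (metis curry_case_prod)
  have "pmf (map_pmf case_prod (Pi_pmf I (\<lambda>_. d) (\<lambda>_. Pi_pmf J d (\<lambda>_. p)))) (case_prod (curry X))
      = pmf (Pi_pmf I (\<lambda>_. d) (\<lambda>_. Pi_pmf J d (\<lambda>_. p))) (curry X)"
    by (rule pmf_map_inj') (rule inj)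
  also have "\<dots> = pmf (Pi_pmf (I \<times> J) d (\<lambda>_. p)) X"
  proof (cases "\<forall>x. x \<notin> I \<times> J \<longrightarrow> X x = d")
    case True
    then show ?thesis using I J
      by (auto simp: pmf_Pi prod.cartesian_product fun_eq_iff intro!: prod.cong)
  next
    case False
    then obtain i j where ij: "(i, j) \<notin> I \<times> J" "X (i, j) \<noteq> d" by auto
    show ?thesis
    proof (cases "i \<in> I")
      case True
      then have "pmf (Pi_pmf J d (\<lambda>_. p)) (curry X i) = 0" using ij J by (auto simp: pmf_Pi)
      then have "(\<Prod>i'\<in>I. pmf (Pi_pmf J d (\<lambda>_. p)) (curry X i')) = 0"
        using True by (intro prod_zero[OF I]) blast
      then have "pmf (Pi_pmf I (\<lambda>_. d) (\<lambda>_. Pi_pmf J d (\<lambda>_. p))) (curry X) = 0"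
        unfolding pmf_Pi[OF I] by simp
      moreover have "pmf (Pi_pmf (I \<times> J) d (\<lambda>_. p)) X = 0"
        using False I J by (subst pmf_Pi) auto
      ultimately show ?thesis by simp
    qed (use False ij I J in \<open>auto simp: pmf_Pi fun_eq_iff\<close>)
  qed
  finally show "pmf (Pi_pmf (I \<times> J) d (\<lambda>_. p)) X = pmf (map_pmf case_prod (Pi_pmf I (\<lambda>_. d) (\<lambda>_. Pi_pmf J d (\<lambda>_. p)))) X"
    by simp
qed

lemma expectation_prod_rows_Pi_pmf:
  fixes F :: "'i \<Rightarrow> ('j \<Rightarrow> 'a) \<Rightarrow> real"
  assumes I: "finite I" and J: "finite J" and F: "\<And>i w. 0 \<le> F i w \<and> F i w \<le> B"
  shows "measure_pmf.expectation (Pi_pmf (I \<times> J) d (\<lambda>_. p)) (\<lambda>X. \<Prod>i\<in>I. F i (\<lambda>j. X (i, j)))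
       = (\<Prod>i\<in>I. measure_pmf.expectation (Pi_pmf J d (\<lambda>_. p)) (F i))"
proof -
  have "measure_pmf.expectation (Pi_pmf (I \<times> J) d (\<lambda>_. p)) (\<lambda>X. \<Prod>i\<in>I. F i (\<lambda>j. X (i, j)))
      = measure_pmf.expectation (Pi_pmf I (\<lambda>_. d) (\<lambda>_. Pi_pmf J d (\<lambda>_. p))) (\<lambda>R. \<Prod>i\<in>I. F i (R i))"
    by (simp add: Pi_pmf_Times_eq_rows[OF I J])
  also have "\<dots> = (\<Prod>i\<in>I. measure_pmf.expectation (Pi_pmf J d (\<lambda>_. p)) (F i))"
    by (rule expectation_prod_Pi_pmf[OF I])
      (use F in \<open>auto intro!: integrable_measure_pmf_bounded[where B = B]\<close>)
  finally show ?thesis .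
qed

lemma prob_Pi_pmf_avoids:
  assumes J: "finite J" and T: "T \<subseteq> J"
  shows "measure_pmf.prob (Pi_pmf J d (\<lambda>_. p)) {w. \<forall>j\<in>T. w j \<noteq> k} = (1 - pmf p k) ^ card T"
proof -
  have "{w. \<forall>j\<in>T. w j \<noteq> k} = Pi J (\<lambda>j. if j \<in> T then - {k} else UNIV)"
    using T by (auto simp: Pi_def)
  then have "measure_pmf.prob (Pi_pmf J d (\<lambda>_. p)) {w. \<forall>j\<in>T. w j \<noteq> k}
      = (\<Prod>j\<in>J. measure_pmf.prob p (if j \<in> T then - {k} else UNIV))"
    using J by (simp add: measure_Pi_pmf_Pi)
  also have "\<dots> = (\<Prod>j\<in>J. if j \<in> T then 1 - pmf p k else 1)"
    using measure_pmf.prob_compl[of "{k}" p]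
    by (intro prod.cong refl) (simp add: measure_pmf_single Compl_eq_Diff_UNIV)
  also have "\<dots> = (1 - pmf p k) ^ card T"
    using J T by (simp add: prod.If_cases Int_absorb1 Int_commute)
  finally show ?thesis .
qed

lemma expectation_Pi_pmf_hits:
  assumes J: "finite J" and T: "T \<subseteq> J"
  shows "measure_pmf.expectation (Pi_pmf J d (\<lambda>_. p)) (\<lambda>w. h (\<exists>j\<in>T. w j = k))
     = h True * (1 - (1 - pmf p k) ^ card T) + h False * (1 - pmf p k) ^ card T"
proof -
  let ?M = "Pi_pmf J d (\<lambda>_. p)" and ?B = "{w. \<forall>j\<in>T. w j \<noteq> k}"
  have "(\<lambda>w. h (\<exists>j\<in>T. w j = k)) = (\<lambda>w. h True + (h False - h True) * indicator ?B w)"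
    by (auto simp: indicator_def fun_eq_iff)
  moreover have "integrable ?M (\<lambda>w. (h False - h True) * indicator ?B w)"
    by (rule integrable_measure_pmf_bounded[where B = "\<bar>h False - h True\<bar>"])
      (simp add: indicator_def abs_mult)
  ultimately have "measure_pmf.expectation ?M (\<lambda>w. h (\<exists>j\<in>T. w j = k))
      = h True + (h False - h True) * measure_pmf.prob ?M ?B"
    by simp
  also have "\<dots> = h True * (1 - (1 - pmf p k) ^ card T) + h False * (1 - pmf p k) ^ card T"
    by (simp add: prob_Pi_pmf_avoids[OF J T] algebra_simps)
  finally show ?thesis .
qed

section \<open>One step of the chain\<close>

lemma config_exists:
  assumes "m \<in> Omega k N"
  shows "\<exists>x. \<forall>l. card {j \<in> {..<N}. x j = l} = m l"
proof -
  define S where "S = {l. m l \<noteq> 0}"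
  have S: "finite S" "(\<Sum>l\<in>S. m l) = N" using assms by (simp_all add: Omega_def S_def)
  define ls where "ls = sorted_list_of_set S"
  have ls: "distinct ls" "set ls = S" using S(1) by (auto simp: ls_def)
  define L where "L = concat (map (\<lambda>l. replicate (m l) l) ls)"
  have length_L: "length L = N"
    unfolding L_def length_concat map_map o_def length_replicate
    using ls S(2) by (simp add: sum_list_distinct_conv_sum_set)
  have count_L: "length (filter ((=) l) L) = m l" for l
  proof -
    have "length (filter ((=) l) L) = (\<Sum>l'\<in>S. length (filter ((=) l) (replicate (m l') l')))"
      unfolding L_def filter_concat length_concat map_map o_def
      using ls by (simp add: sum_list_distinct_conv_sum_set)
    also have "\<dots> = (\<Sum>l'\<in>S. if l' = l then m l else 0)"
      by (intro sum.cong refl) (auto simp: filter_replicate)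
    also have "\<dots> = m l" using S(1) by (auto simp: S_def)
    finally show ?thesis .
  qed
  have "card {j \<in> {..<N}. L ! j = l} = m l" for l
    using count_L[of l] by (simp add: length_filter_conv_card length_L eq_commute)
  then show ?thesis by blast
qed

lemma card_config_eq:
  assumes "m \<in> Omega k N"
  shows "card {j \<in> {..<N}. config N m j = l} = m l"
  using someI_ex[OF config_exists[OF assms]] unfolding config_def by blast

lemma phi_Omega:
  assumes m: "m \<in> Omega k N" and N: "1 \<le> N"
  shows "0 < m (phi m)" and "\<And>l. 0 < m l \<Longrightarrow> l \<le> phi m" and "phi m \<le> k"
proof -
  have support: "{l. 0 < m l} = {l. m l \<noteq> 0}" by auto
  then have fin: "finite {l. 0 < m l}" using m by (simp add: Omega_def)
  have "{l. m l \<noteq> 0} \<noteq> {}"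
  proof
    assume "{l. m l \<noteq> 0} = {}"
    then show False using m N by (simp add: Omega_def)
  qed
  then have "phi m \<in> {l. 0 < m l}" unfolding phi_def support by (rule Max_in[OF fin[unfolded support]])
  then show pos: "0 < m (phi m)" by simp
  show "l \<le> phi m" if "0 < m l" for l
    unfolding phi_def by (rule Max_ge[OF fin]) (use that in simp)
  show "phi m \<le> k"
  proof (rule ccontr)
    assume "\<not> phi m \<le> k"
    then have "m (phi m) = 0" using m by (simp add: Omega_def)
    then show False using pos by simp
  qed
qed

lemma config_le_phi:
  assumes m: "m \<in> Omega k N" and j: "j < N"
  shows "config N m j \<le> phi m"
proof -
  have "0 < card {j' \<in> {..<N}. config N m j' = config N m j}"
    using j by (auto simp: card_gt_0_iff)
  then have "0 < m (config N m j)" by (simp only: card_config_eq[OF m])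
  then show ?thesis using j by (intro phi_Omega(2)[OF m]) auto
qed

lemma Omega_le: "m \<in> Omega k N \<Longrightarrow> m l \<le> N"
  unfolding Omega_def by (cases "m l = 0") (auto intro: member_le_sum)

lemma Omega_eq_oplus_iff:
  assumes m: "m \<in> Omega k N"
  shows "m = oplus k N \<longleftrightarrow> m k = N"
proof
  assume top: "m k = N"
  let ?S = "{l. m l \<noteq> 0}"
  have S: "finite ?S" "sum m ?S = N" using m by (simp_all add: Omega_def)
  have "m l = 0" if "l \<noteq> k" for l
  proof -
    have "m k + m l = sum m {k, l}" using that by simp
    also have "\<dots> \<le> sum m (?S \<union> {k, l})" by (rule sum_mono2) (use S in auto)
    also have "\<dots> = sum m ?S" by (rule sum.mono_neutral_right) (use S in auto)
    finally show ?thesis using S top by simp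
  qed
  then show "m = oplus k N" using top by (auto simp: oplus_def)
qed (simp add: oplus_def)

lemma oplus_in_Omega: "oplus k N \<in> Omega k N"
proof (cases "N = 0")
  case False
  then have "{l. oplus k N l \<noteq> 0} = {k}" by (auto simp: oplus_def)
  then show ?thesis by (auto simp: Omega_def oplus_def)
qed (simp add: Omega_def oplus_def)

definition noise :: "int pmf \<Rightarrow> nat \<Rightarrow> (nat \<times> nat \<Rightarrow> int) pmf" where
  "noise xi N = Pi_pmf ({..<N} \<times> {..<N}) 0 (\<lambda>_. xi)"

definition row_max :: "nat \<Rightarrow> (int \<Rightarrow> nat) \<Rightarrow> (nat \<times> nat \<Rightarrow> int) \<Rightarrow> nat \<Rightarrow> int" where
  "row_max N m X i = (MAX j\<in>{..<N}. config N m j + X (i, j))"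

definition next_state :: "nat \<Rightarrow> (int \<Rightarrow> nat) \<Rightarrow> (nat \<times> nat \<Rightarrow> int) \<Rightarrow> int \<Rightarrow> nat" where
  "next_state N m X l = card {i \<in> {..<N}. row_max N m X i = phi m + l}"

lemma step_eq_map_next_state: "step xi N m = map_pmf (next_state N m) (noise xi N)"
  unfolding step_def next_state_def row_max_def noise_def ..

definition top_columns :: "nat \<Rightarrow> (int \<Rightarrow> nat) \<Rightarrow> nat set" where
  "top_columns N m = {j \<in> {..<N}. config N m j = phi m}"

definition row_hits_top :: "int \<Rightarrow> nat \<Rightarrow> (int \<Rightarrow> nat) \<Rightarrow> (nat \<times> nat \<Rightarrow> int) \<Rightarrow> nat \<Rightarrow> bool" where
  "row_hits_top k N m X i \<longleftrightarrow> (\<exists>j\<in>top_columns N m. X (i, j) = k)"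

lemma top_columns_subset: "top_columns N m \<subseteq> {..<N}"
  by (auto simp: top_columns_def)

lemma card_top_columns: "m \<in> Omega k N \<Longrightarrow> card (top_columns N m) = m (phi m)"
  unfolding top_columns_def by (rule card_config_eq)

lemma noise_le:
  assumes "X \<in> set_pmf (noise xi N)" "set_pmf xi \<subseteq> {..k}" "i < N" "j < N"
  shows "X (i, j) \<le> k"
  using assms by (auto simp: noise_def set_Pi_pmf PiE_dflt_def)

lemma row_max_le:
  assumes m: "m \<in> Omega k N" and N: "1 \<le> N" and X: "X \<in> set_pmf (noise xi N)"
    and xi: "set_pmf xi \<subseteq> {..k}" and i: "i < N"
  shows "row_max N m X i \<le> phi m + k"
  using N config_le_phi[OF m] noise_le[OF X xi i]
  by (auto simp: row_max_def Max_le_iff lessThan_empty_iff intro: add_mono)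

lemma row_max_eq_iff:
  assumes m: "m \<in> Omega k N" and N: "1 \<le> N" and X: "X \<in> set_pmf (noise xi N)"
    and xi: "set_pmf xi \<subseteq> {..k}" and i: "i < N"
  shows "row_max N m X i = phi m + k \<longleftrightarrow> row_hits_top k N m X i"
proof
  assume max: "row_max N m X i = phi m + k"
  have "row_max N m X i \<in> (\<lambda>j. config N m j + X (i, j)) ` {..<N}"
    unfolding row_max_def using N by (intro Max_in) (auto simp: lessThan_empty_iff)
  then obtain j where j: "j < N" "config N m j + X (i, j) = phi m + k" using max by auto
  moreover have "config N m j \<le> phi m" "X (i, j) \<le> k"
    using config_le_phi[OF m j(1)] noise_le[OF X xi i j(1)] by auto
  ultimately show "row_hits_top k N m X i"
    unfolding row_hits_top_def top_columns_def by (intro bexI[of _ j]) auto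
next
  assume "row_hits_top k N m X i"
  then obtain j where j: "j < N" "config N m j = phi m" "X (i, j) = k"
    unfolding row_hits_top_def top_columns_def by blast
  then have "config N m j + X (i, j) \<le> row_max N m X i"
    unfolding row_max_def by (intro Max_ge finite_imageI rev_image_eqI[of j]) (simp_all add: j(1))
  then have "phi m + k \<le> row_max N m X i"
    using j by simp
  then show "row_max N m X i = phi m + k"
    using row_max_le[OF m N X xi i] by linarith
qed

lemma next_state_in_Omega:
  assumes m: "m \<in> Omega k N" and N: "1 \<le> N" and X: "X \<in> set_pmf (noise xi N)"
    and xi: "set_pmf xi \<subseteq> {..k}"
  shows "next_state N m X \<in> Omega k N"
proof -
  let ?lvl = "\<lambda>i. row_max N m X i - phi m"
  have support: "{l. next_state N m X l \<noteq> 0} = ?lvl ` {..<N}"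
    by (force simp: next_state_def)
  have "(\<Sum>l\<in>?lvl ` {..<N}. next_state N m X l) = card (\<Union>l\<in>?lvl ` {..<N}. {i \<in> {..<N}. row_max N m X i = phi m + l})"
    unfolding next_state_def by (rule card_UN_disjoint[symmetric]) auto
  also have "(\<Union>l\<in>?lvl ` {..<N}. {i \<in> {..<N}. row_max N m X i = phi m + l}) = {..<N}"
    by force
  finally have "(\<Sum>l\<in>{l. next_state N m X l \<noteq> 0}. next_state N m X l) = N"
    by (simp only: support card_lessThan)
  moreover have "next_state N m X l = 0" if "k < l" for l
    using row_max_le[OF m N X xi] that by (force simp: next_state_def)
  ultimately show ?thesis
    unfolding Omega_def using support by auto
qed

lemma set_pmf_step:
  assumes "m \<in> Omega k N" "1 \<le> N" "set_pmf xi \<subseteq> {..k}"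
  shows "set_pmf (step xi N m) \<subseteq> Omega k N"
  using next_state_in_Omega[OF assms(1,2) _ assms(3)] by (auto simp: step_eq_map_next_state)

lemma next_state_top:
  assumes m: "m \<in> Omega k N" and N: "1 \<le> N" and X: "X \<in> set_pmf (noise xi N)"
    and xi: "set_pmf xi \<subseteq> {..k}"
  shows "next_state N m X k = card {i \<in> {..<N}. row_hits_top k N m X i}"
  unfolding next_state_def using row_max_eq_iff[OF m N X xi]
  by (intro arg_cong[where f = card]) auto

text \<open>The number of particles at the top level of the next state is binomial with parameters
  \<open>N\<close> and \<open>1 - x\<close>; this is its generating function.\<close>

lemma expectation_step_top_count:
  assumes m: "m \<in> Omega k N" and N: "1 \<le> N" and xi: "set_pmf xi \<subseteq> {..k}"
    and a: "0 \<le> a" and b: "0 \<le> b"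
  defines "x \<equiv> (1 - pmf xi k) ^ m (phi m)"
  shows "measure_pmf.expectation (step xi N m) (\<lambda>m'. a ^ m' k * b ^ (N - m' k)) = (a * (1 - x) + b * x) ^ N"
proof -
  let ?R = "row_hits_top k N m"
  have "measure_pmf.expectation (step xi N m) (\<lambda>m'. a ^ m' k * b ^ (N - m' k))
      = measure_pmf.expectation (noise xi N) (\<lambda>X. \<Prod>i\<in>{..<N}. if ?R X i then a else b)"
  proof (unfold step_eq_map_next_state integral_map_pmf, intro integral_cong_AE AE_pmfI)
    fix X assume X: "X \<in> set_pmf (noise xi N)"
    let ?H = "{..<N} \<inter> {i. ?R X i}"
    have "next_state N m X k = card ?H"
      using next_state_top[OF m N X xi] by (simp add: Int_def)
    moreover have "card ({..<N} \<inter> - {i. ?R X i}) = N - card ?H"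
      by (simp add: Diff_eq[symmetric] card_Diff_subset_Int)
    ultimately show "a ^ next_state N m X k * b ^ (N - next_state N m X k)
        = (\<Prod>i\<in>{..<N}. if ?R X i then a else b)"
      by (simp add: prod.If_cases)
  qed simp_all
  also have "\<dots> = (\<Prod>i\<in>{..<N}. measure_pmf.expectation (Pi_pmf {..<N} 0 (\<lambda>_. xi))
      (\<lambda>w. if \<exists>j\<in>top_columns N m. w j = k then a else b))"
    unfolding noise_def row_hits_top_def
    by (rule expectation_prod_rows_Pi_pmf[where B = "a + b"]) (use a b in auto)
  also have "\<dots> = (a * (1 - x) + b * x) ^ N"
    using expectation_Pi_pmf_hits[OF finite_lessThan top_columns_subset, where d = 0 and p = xi
        and h = "\<lambda>c. if c then a else b" and k = k]
    by (simp add: card_top_columns[OF m] x_def)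
  finally show ?thesis .
qed

section \<open>The Lyapunov function\<close>

definition lyapunov :: "real \<Rightarrow> nat \<Rightarrow> (int \<Rightarrow> nat) \<Rightarrow> real" where
  "lyapunov q N m = 2 * q ^ (N - 1) * (q ^ m (phi m) + 1)"

lemma lyapunov_bounds:
  assumes "0 \<le> q" "q \<le> 1"
  shows "0 \<le> lyapunov q N m \<and> lyapunov q N m \<le> 4 * q ^ (N - 1)"
proof -
  have "0 \<le> q ^ m (phi m)" "q ^ m (phi m) \<le> 1" "0 \<le> q ^ (N - 1)"
    using assms by (auto simp: power_le_one)
  moreover from this have "q ^ (N - 1) * (q ^ m (phi m) + 1) \<le> q ^ (N - 1) * 2"
    by (intro mult_left_mono) auto
  ultimately show ?thesis unfolding lyapunov_def by auto
qed

lemma power_phi_le_power_top: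
  assumes m: "m \<in> Omega k N" and N: "1 \<le> N" and q: "0 \<le> q" "q \<le> (1::real)"
  shows "q ^ m (phi m) \<le> q ^ m k"
proof (cases "m k = 0")
  case False
  then have "phi m = k" using phi_Omega(2)[OF m N, of k] phi_Omega(3)[OF m N] by simp
  then show ?thesis by simp
qed (use q in \<open>simp add: power_le_one\<close>)

lemma drift_integrand_le:
  assumes m: "m \<in> Omega k N" and N: "1 \<le> N" and q: "0 \<le> q" "q \<le> 1"
  shows "(if m = oplus k N then 0 else indicator (Omega0 k N) m + lyapunov q N m)
     \<le> 0 ^ m k + 2 * q ^ (N - 1) * q ^ m k + 2 * q ^ (N - 1) * (1 - 0 ^ (N - m k))"
proof (cases "m = oplus k N")
  case True
  then show ?thesis using q by (simp add: oplus_def)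
next
  case False
  then have "m k < N" using Omega_eq_oplus_iff[OF m] Omega_le[OF m, of k] by simp
  moreover have "indicator (Omega0 k N) m = (0::real) ^ m k"
    using m by (simp add: Omega0_def indicator_def)
  moreover have "lyapunov q N m \<le> 2 * q ^ (N - 1) * (q ^ m k + 1)"
    unfolding lyapunov_def using power_phi_le_power_top[OF m N q] q by (intro mult_left_mono) auto
  ultimately show ?thesis using False by (simp add: algebra_simps zero_power)
qed

lemma lyapunov_drift_arith:
  fixes p x :: real and N :: nat
  assumes p: "0 < p" "p < 1" and x: "0 \<le> x" "x \<le> 1 - p" and N: "1 \<le> N"
    and big: "(2 * real N + 1) * (1 - p^2) ^ N \<le> 1"
  defines "\<beta> \<equiv> 2 * (1 - p) ^ (N - 1)"
  shows "x ^ N + \<beta> * ((1 - p) * (1 - x) + x) ^ N + \<beta> * (1 - (1 - x) ^ N) \<le> \<beta> * (x + 1)"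
proof -
  define \<eta> where "\<eta> = (1 - p^2) ^ N"
  have \<beta>: "0 \<le> \<beta>" using p by (simp add: \<beta>_def)
  have miss_all: "x ^ N \<le> \<beta> * x / 2"
  proof -
    have "x ^ N = x * x ^ (N - 1)" using N by (metis Suc_diff_le diff_Suc_1 power_Suc)
    also have "\<dots> \<le> x * (1 - p) ^ (N - 1)" using x by (intro mult_left_mono power_mono) auto
    finally show ?thesis by (simp add: \<beta>_def mult.commute)
  qed
  have pgf_le: "((1 - p) * (1 - x) + x) ^ N \<le> \<eta>"
  proof -
    have "(1 - p) * (1 - x) + x = 1 - p * (1 - x)" by (simp add: algebra_simps)
    moreover have "p * p \<le> p * (1 - x)" using p x by (intro mult_left_mono) auto
    moreover have "p * (1 - x) \<le> 1" using p x by (simp add: mult_le_one)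
    ultimately show ?thesis unfolding \<eta>_def
      by (intro power_mono) (auto simp: power2_eq_square)
  qed
  txt \<open>For \<open>x < 2 \<eta>\<close>, Bernoulli's inequality and \<open>big\<close> give \<open>(1 - x) ^ N \<ge> 1 - 2 N \<eta> \<ge> \<eta>\<close>.\<close>
  have eta_le: "\<eta> \<le> x / 2 + (1 - x) ^ N"
  proof (cases "2 * \<eta> \<le> x")
    case True
    have "0 \<le> (1 - x) ^ N" using x p by simp
    then show ?thesis using True by linarith
  next
    case False
    have "1 + real N * (- x) \<le> (1 + - x) ^ N" by (rule Bernoulli_inequality) (use x p in auto)
    then have "1 - real N * x \<le> (1 - x) ^ N" by simp
    moreover have "real N * x \<le> real N * (2 * \<eta>)" using False by (intro mult_left_mono) auto
    moreover have "(2 * real N + 1) * \<eta> \<le> 1" using big by (simp add: \<eta>_def)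
    ultimately show ?thesis using x by (simp add: algebra_simps)
  qed
  have "x ^ N + \<beta> * ((1 - p) * (1 - x) + x) ^ N + \<beta> * (1 - (1 - x) ^ N)
      \<le> \<beta> * x / 2 + \<beta> * (x / 2 + (1 - x) ^ N) + \<beta> * (1 - (1 - x) ^ N)"
    using miss_all mult_left_mono[OF order.trans[OF pgf_le eta_le] \<beta>] by linarith
  also have "\<dots> = \<beta> * (x + 1)" by (simp add: algebra_simps)
  finally show ?thesis .
qed

lemma expectation_drift_integrand_le:
  assumes m: "m \<in> Omega k N" and N: "1 \<le> N" and xi: "set_pmf xi \<subseteq> {..k}"
    and q: "0 \<le> q" "q \<le> 1"
  defines "E \<equiv> measure_pmf.expectation (step xi N m)" and "\<beta> \<equiv> 2 * q ^ (N - 1)"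
  shows "E (\<lambda>m'. if m' = oplus k N then 0 else indicator (Omega0 k N) m' + lyapunov q N m')
    \<le> E (\<lambda>m'. 0 ^ m' k) + \<beta> * E (\<lambda>m'. q ^ m' k) + \<beta> * (1 - E (\<lambda>m'. 0 ^ (N - m' k)))"
proof -
  have integrable: "integrable (measure_pmf (step xi N m)) (\<lambda>m'. a ^ h m')"
    if "0 \<le> a" "a \<le> 1" for a :: real and h :: "(int \<Rightarrow> nat) \<Rightarrow> nat"
    by (rule integrable_measure_pmf_bounded[where B = 1]) (use that in \<open>auto simp: power_le_one\<close>)
  have "E (\<lambda>m'. if m' = oplus k N then 0 else indicator (Omega0 k N) m' + lyapunov q N m')
      \<le> E (\<lambda>m'. 0 ^ m' k + \<beta> * q ^ m' k + \<beta> * (1 - 0 ^ (N - m' k)))"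
    unfolding E_def
  proof (rule integral_mono_AE)
    show "integrable (measure_pmf (step xi N m))
        (\<lambda>m'. if m' = oplus k N then 0 else indicator (Omega0 k N) m' + lyapunov q N m')"
    proof (rule integrable_measure_pmf_bounded[where B = "1 + 4 * q ^ (N - 1)"])
      show "\<bar>if m' = oplus k N then 0 else indicator (Omega0 k N) m' + lyapunov q N m'\<bar>
          \<le> 1 + 4 * q ^ (N - 1)" for m'
        using lyapunov_bounds[OF q, of N m'] q by (auto simp: indicator_def)
    qed
    show "integrable (measure_pmf (step xi N m))
        (\<lambda>m'. 0 ^ m' k + \<beta> * q ^ m' k + \<beta> * (1 - 0 ^ (N - m' k)))"
      using q by (intro Bochner_Integration.integrable_add Bochner_Integration.integrable_diff
          integrable_mult_right integrable) auto
    show "AE m' in measure_pmf (step xi N m). (if m' = oplus k N then 0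
        else indicator (Omega0 k N) m' + lyapunov q N m')
        \<le> 0 ^ m' k + \<beta> * q ^ m' k + \<beta> * (1 - 0 ^ (N - m' k))"
      using drift_integrand_le[OF _ N q] set_pmf_step[OF m N xi] unfolding \<beta>_def
      by (intro AE_pmfI) blast
  qed
  also have "\<dots> = E (\<lambda>m'. 0 ^ m' k) + \<beta> * E (\<lambda>m'. q ^ m' k) + \<beta> * (1 - E (\<lambda>m'. 0 ^ (N - m' k)))"
    unfolding E_def using integrable[of 0 "\<lambda>m'. m' k"] integrable[of q "\<lambda>m'. m' k"]
      integrable[of 0 "\<lambda>m'. N - m' k"] q
    by (simp add: Bochner_Integration.integral_add Bochner_Integration.integral_diff)
  finally show ?thesis .
qed

lemma lyapunov_drift:
  fixes xi :: "int pmf"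
  assumes xi: "set_pmf xi \<subseteq> {..k}" and p: "0 < pmf xi k" "pmf xi k < 1" and N: "1 \<le> N"
    and big: "(2 * real N + 1) * (1 - (pmf xi k)\<^sup>2) ^ N \<le> 1" and m: "m \<in> Omega k N"
  defines "q \<equiv> 1 - pmf xi k"
  shows "measure_pmf.expectation (step xi N m)
      (\<lambda>m'. if m' = oplus k N then 0 else indicator (Omega0 k N) m' + lyapunov q N m')
    \<le> lyapunov q N m"
proof -
  define \<beta> where "\<beta> = 2 * q ^ (N - 1)"
  define x where "x = q ^ m (phi m)"
  have q: "0 \<le> q" "q \<le> 1" using p by (auto simp: q_def)
  have x: "0 \<le> x" "x \<le> 1 - pmf xi k"
    using q power_decreasing[of 1 "m (phi m)" q] phi_Omega(1)[OF m N] by (auto simp: x_def q_def)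
  have "measure_pmf.expectation (step xi N m)
      (\<lambda>m'. if m' = oplus k N then 0 else indicator (Omega0 k N) m' + lyapunov q N m')
    \<le> x ^ N + \<beta> * (q * (1 - x) + x) ^ N + \<beta> * (1 - (1 - x) ^ N)"
    using expectation_drift_integrand_le[OF m N xi q]
      expectation_step_top_count[OF m N xi, of 0 1] expectation_step_top_count[OF m N xi, of q 1]
      expectation_step_top_count[OF m N xi, of 1 0] q
    by (simp add: x_def q_def \<beta>_def)
  also have "\<dots> \<le> \<beta> * (x + 1)"
    unfolding \<beta>_def q_def by (rule lyapunov_drift_arith[OF p(1) p(2) x N big])
  also have "\<dots> = lyapunov q N m" by (simp add: lyapunov_def \<beta>_def x_def)
  finally show ?thesis .
qed

section \<open>Asymptotics\<close>

lemma eventually_linear_times_power_le_1: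
  fixes p :: real
  assumes "0 < p" "p < 1"
  shows "\<forall>\<^sub>F N in at_top. (2 * real N + 1) * (1 - p^2) ^ N \<le> 1"
proof -
  define r where "r = 1 - p^2"
  have r: "0 \<le> r" "r < 1" using assms by (auto simp: r_def power2_eq_square mult_le_one)
  have "(\<lambda>N. 2 * (real N * r ^ N) + r ^ N) \<longlonglongrightarrow> 2 * 0 + 0"
    by (intro tendsto_intros powser_times_n_limit_0) (use r in auto)
  then have "\<forall>\<^sub>F N in sequentially. 2 * (real N * r ^ N) + r ^ N < 1"
    by (intro order_tendstoD(2)) auto
  then show ?thesis
    by eventually_elim (simp add: r_def algebra_simps)
qed

lemma eventually_hit_before_singleton_sums_bounds:
  fixes xi :: "int pmf"
  assumes xi: "set_pmf xi \<subseteq> {..k}" and p: "0 < pmf xi k" "pmf xi k < 1"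
  shows "\<forall>\<^sub>F N in at_top.
    (\<lambda>n. hit_before (step xi N) (oplus k N) {n} (oplus k N)) summable_on Omega0 k N \<and>
    hit_before (step xi N) (oplus k N) (Omega0 k N) (oplus k N)
      \<le> (\<Sum>\<^sub>\<infinity>n\<in>Omega0 k N. hit_before (step xi N) (oplus k N) {n} (oplus k N)) \<and>
    (\<Sum>\<^sub>\<infinity>n\<in>Omega0 k N. hit_before (step xi N) (oplus k N) {n} (oplus k N))
      \<le> (1 + 4 * (1 - pmf xi k) ^ (N - 1)) * hit_before (step xi N) (oplus k N) (Omega0 k N) (oplus k N)"
  using eventually_linear_times_power_le_1[OF p] eventually_ge_at_top[of 1]
proof eventually_elim
  case (elim N)
  have q: "0 \<le> 1 - pmf xi k" "1 - pmf xi k \<le> 1" by (simp_all add: pmf_le_1)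
  show ?case
    using hit_before_singleton_sums_bounds[OF set_pmf_step[OF _ elim(2) xi] lyapunov_bounds[OF q]
        lyapunov_drift[OF xi p elim(2,1)] oplus_in_Omega]
    by blast
qed

lemma relative_error_bigo:
  fixes H S e :: "'a \<Rightarrow> real"
  assumes "\<forall>\<^sub>F N in F. H N \<le> S N \<and> S N \<le> (1 + e N) * H N"
  shows "\<exists>\<epsilon>. \<epsilon> \<in> O[F](e) \<and> (\<forall>\<^sub>F N in F. S N = H N * (1 + \<epsilon> N))"
proof (intro exI conjI)
  define \<epsilon> where "\<epsilon> N = (if H N = 0 then 0 else S N / H N - 1)" for N
  have bounds: "\<bar>\<epsilon> N\<bar> \<le> \<bar>e N\<bar> \<and> S N = H N * (1 + \<epsilon> N)"
    if "H N \<le> S N" "S N \<le> (1 + e N) * H N" for N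
  proof (cases "H N = 0")
    case False
    then have "S N = H N * (1 + \<epsilon> N)" by (simp add: \<epsilon>_def)
    moreover have "H N * 1 \<le> H N * (1 + \<epsilon> N)" "H N * (1 + \<epsilon> N) \<le> H N * (1 + e N)"
      using that calculation by (simp_all add: algebra_simps)
    ultimately show ?thesis
      using False by (cases "0 < H N") (auto simp: mult_le_cancel_left)
  qed (use that in \<open>simp add: \<epsilon>_def\<close>)
  show "\<epsilon> \<in> O[F](e)"
    by (rule bigoI[where c = 1]) (use assms bounds in \<open>auto elim!: eventually_mono\<close>)
  show "\<forall>\<^sub>F N in F. S N = H N * (1 + \<epsilon> N)"
    using assms bounds by (auto elim!: eventually_mono)
qed

lemma power_diff_1_bigo_exp:
  fixes q :: real
  assumes "0 < q"
  shows "(\<lambda>N. c * q ^ (N - 1)) \<in> O(\<lambda>N. exp (ln q * real N))"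
proof (rule bigoI[where c = "\<bar>c\<bar> / q"])
  show "\<forall>\<^sub>F N in at_top. norm (c * q ^ (N - 1)) \<le> \<bar>c\<bar> / q * norm (exp (ln q * real N))"
    using eventually_ge_at_top[of 1]
  proof eventually_elim
    case (elim N)
    then have "q ^ N = q * q ^ (N - 1)" by (metis Suc_diff_le diff_Suc_1 power_Suc)
    moreover have "exp (ln q * real N) = q ^ N"
      using assms by (simp add: exp_of_nat2_mult)
    ultimately show ?case using assms by (simp add: abs_mult)
  qed
qed

theorem lemma6p6:
  fixes k :: int and xi :: "int pmf"
  assumes "set_pmf xi \<subseteq> {..k}" and "0 < pmf xi k" and "pmf xi k < 1"
  shows "\<exists>C>0. \<exists>\<epsilon>::nat \<Rightarrow> real. \<epsilon> \<in> O(\<lambda>N. exp (- C * real N)) \<and>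
    (\<forall>\<^sub>F N in at_top.
       (\<lambda>n. hit_before (step xi N) (oplus k N) {n} (oplus k N)) summable_on Omega0 k N \<and>
       (\<Sum>\<^sub>\<infinity>n\<in>Omega0 k N. hit_before (step xi N) (oplus k N) {n} (oplus k N))
         = hit_before (step xi N) (oplus k N) (Omega0 k N) (oplus k N) * (1 + \<epsilon> N))"
proof -
  define q where "q = 1 - pmf xi k"
  have q: "0 < q" "q < 1" using assms by (auto simp: q_def)
  define H where "H N = hit_before (step xi N) (oplus k N) (Omega0 k N) (oplus k N)" for N
  define S where "S N = (\<Sum>\<^sub>\<infinity>n\<in>Omega0 k N. hit_before (step xi N) (oplus k N) {n} (oplus k N))" for N
  note bounds = eventually_hit_before_singleton_sums_bounds[OF assms, folded q_def H_def S_def]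
  then have "\<forall>\<^sub>F N in at_top. H N \<le> S N \<and> S N \<le> (1 + 4 * q ^ (N - 1)) * H N"
    by (auto elim: eventually_mono)
  then obtain \<epsilon> where \<epsilon>: "\<epsilon> \<in> O(\<lambda>N. 4 * q ^ (N - 1))" "\<forall>\<^sub>F N in at_top. S N = H N * (1 + \<epsilon> N)"
    using relative_error_bigo[where H = H and S = S and e = "\<lambda>N. 4 * q ^ (N - 1)"] by blast
  have "\<epsilon> \<in> O(\<lambda>N. exp (- (- ln q) * real N))"
    using landau_o.big_trans[OF \<epsilon>(1) power_diff_1_bigo_exp[OF q(1)]] by simp
  moreover have "0 < - ln q" using q by simp
  ultimately show ?thesis
    using \<epsilon>(2) bounds unfolding H_def S_def
    by (intro exI[of _ "- ln q"] exI[of _ \<epsilon>] conjI) (auto elim: eventually_elim2)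
qed

end
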